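(* Let $G$ be a graph, let $\mathcal P$ be a partition of $A\subseteq V(G)$ and $\mathcal P'$ a partition of $A'\subseteq V(G)$. If $d(A,A')\ne 0$ then $$\mathcal H(\mathcal P,\mathcal P')-\mathcal H(\{A\},\{A'\})\ge \frac12\, d(A,A')\Bigg(\sum_{V\in\mathcal P,\ V'\in\mathcal P'}\frac{|V||V'|}{|A||A'|}\,\Big|\frac{d(V,V')}{d(A,A')}-1\Big|\Bigg)^2 .$$
   Context: $e(X,Y)$ is the number of ordered pairs $(u,v)\in X\times Y$ with $uv\in E(G)$ and $d(X,Y)=e(X,Y)/(|X||Y|)$. $H(x)=x\ln x$ with $H(0)=0$. For a partition $\mathcal P$ of $A\subseteq V(G)$ and a partition $\mathcal P'$ of $A'\subseteq V(G)$, $$\mathcal H(\mathcal P,\mathcal P')=\sum_{V\in\mathcal P,\,V'\in\mathcal P'}\frac{|V||V'|}{|A||A'|}H(d(V,V')).$$ *)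

theory Defs
  imports Complex_Main "HOL-Library.Disjoint_Sets"
begin

definition simple_graph :: "'a set \<Rightarrow> ('a \<Rightarrow> 'a \<Rightarrow> bool) \<Rightarrow> bool" where
  "simple_graph V E \<longleftrightarrow> finite V \<and> (\<forall>u v. E u v \<longrightarrow> E v u) \<and> (\<forall>u. \<not> E u u)
     \<and> (\<forall>u v. E u v \<longrightarrow> u \<in> V \<and> v \<in> V)"

definition e_pairs :: "('a \<Rightarrow> 'a \<Rightarrow> bool) \<Rightarrow> 'a set \<Rightarrow> 'a set \<Rightarrow> nat" where
  "e_pairs E X Y = card {(u, v). u \<in> X \<and> v \<in> Y \<and> E u v}"

definition density :: "('a \<Rightarrow> 'a \<Rightarrow> bool) \<Rightarrow> 'a set \<Rightarrow> 'a set \<Rightarrow> real" where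
  "density E X Y = real (e_pairs E X Y) / (real (card X) * real (card Y))"

definition Hfun :: "real \<Rightarrow> real" where
  "Hfun x = (if x = 0 then 0 else x * ln x)"

definition entropy_pp :: "('a \<Rightarrow> 'a \<Rightarrow> bool) \<Rightarrow> 'a set \<Rightarrow> 'a set set \<Rightarrow> 'a set \<Rightarrow> 'a set set \<Rightarrow> real" where
  "entropy_pp E A P A' P' =
     (\<Sum>(W, W') \<in> P \<times> P'. real (card W) * real (card W') / (real (card A) * real (card A'))
        * Hfun (density E W W'))"

end

theory Submission
  imports Defs "HOL-Analysis.Convex"
begin

text \<open>Normalise the densities by \<open>d = d(A,A')\<close>: with weights \<open>w = |V||V'|/(|A||A'|)\<close> and
  ratios \<open>x = d(V,V')/d\<close> one has \<open>\<Sum> w = \<Sum> w x = 1\<close>, and the entropy gain equals \<open>d \<Sum> w H(x)\<close>.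
  The claim is then a Pinsker-type inequality \<open>\<Sum> w H(x) \<ge> (\<Sum> w |x - 1|)\<^sup>2 / 2\<close>. It follows
  from the pointwise bound \<open>H(x) \<ge> x - 1 + 3(x-1)\<^sup>2/(2(x+2))\<close>, which turns \<open>\<Sum> w H(x)\<close> into
  \<open>(3/2) \<Sum> w (x-1)\<^sup>2/(x+2)\<close>, and Cauchy-Schwarz against \<open>\<Sum> w (x+2) = 3\<close>.\<close>

lemma ln_ge_rational_bound:
  fixes x :: real
  assumes "x > 0"
  shows "ln x \<ge> (x - 1) * (5 * x + 1) / (2 * x * (x + 2))"
proof -
  define g where "g t = ln t - (t - 1) * (5 * t + 1) / (2 * t * (t + 2))" for t :: real
  have g_deriv: "DERIV g t :> (t - 1) ^ 3 / (t\<^sup>2 * (t + 2)\<^sup>2)" if "t > 0" for t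
  proof -
    have "DERIV g t :> 1 / t - ((5 * t + 1 + (t - 1) * 5) * (2 * t * (t + 2))
        - (t - 1) * (5 * t + 1) * (2 * (t + 2) + 2 * t)) / (2 * t * (t + 2))\<^sup>2"
      unfolding g_def using that by (auto intro!: derivative_eq_intros simp: power2_eq_square)
    moreover have "1 / t - ((5 * t + 1 + (t - 1) * 5) * (2 * t * (t + 2))
        - (t - 1) * (5 * t + 1) * (2 * (t + 2) + 2 * t)) / (2 * t * (t + 2))\<^sup>2
        = (t - 1) ^ 3 / (t\<^sup>2 * (t + 2)\<^sup>2)"
      using that by (simp add: divide_simps) (simp add: algebra_simps power2_eq_square power3_eq_cube)
    ultimately show ?thesis by simp
  qed
  have "g 1 \<le> g x"
  proof (cases "x \<ge> 1")
    case True
    show ?thesis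
    proof (rule DERIV_nonneg_imp_nondecreasing[OF True])
      fix t :: real assume "1 \<le> t" "t \<le> x"
      then show "\<exists>y. DERIV g t :> y \<and> y \<ge> 0"
        using g_deriv by (intro exI[of _ "(t - 1) ^ 3 / (t\<^sup>2 * (t + 2)\<^sup>2)"] conjI) auto
    qed
  next
    case False
    show ?thesis
    proof (rule DERIV_nonpos_imp_nonincreasing[of x 1])
      fix t :: real assume "x \<le> t" "t \<le> 1"
      then show "\<exists>y. DERIV g t :> y \<and> y \<le> 0"
        using assms g_deriv
        by (intro exI[of _ "(t - 1) ^ 3 / (t\<^sup>2 * (t + 2)\<^sup>2)"] conjI)
          (auto intro!: divide_nonpos_nonneg simp: power_le_zero_eq)
    qed (use False in simp)
  qed
  then show ?thesis by (simp add: g_def)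
qed

lemma Hfun_ge_quadratic_bound:
  fixes x :: real
  assumes "x \<ge> 0"
  shows "Hfun x \<ge> x - 1 + 3 * (x - 1)\<^sup>2 / (2 * (x + 2))"
proof (cases "x = 0")
  case True
  then show ?thesis by (simp add: Hfun_def)
next
  case False
  then have x: "x > 0" using assms by simp
  have "x * ln x \<ge> x * ((x - 1) * (5 * x + 1) / (2 * x * (x + 2)))"
    using ln_ge_rational_bound[OF x] x by (intro mult_left_mono) auto
  also have "x * ((x - 1) * (5 * x + 1) / (2 * x * (x + 2))) = x - 1 + 3 * (x - 1)\<^sup>2 / (2 * (x + 2))"
    using x by (simp add: divide_simps) (simp add: algebra_simps power2_eq_square)
  finally show ?thesis using False by (simp add: Hfun_def)
qed

lemma Hfun_mult:
  fixes d x :: real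
  assumes "d > 0" "x \<ge> 0"
  shows "Hfun (d * x) = d * Hfun x + d * x * ln d"
  using assms by (cases "x = 0") (auto simp: Hfun_def ln_mult algebra_simps)

lemma pinsker_Hfun:
  fixes w x :: "'i \<Rightarrow> real"
  assumes "finite I" and w: "\<And>i. i \<in> I \<Longrightarrow> w i \<ge> 0" and x: "\<And>i. i \<in> I \<Longrightarrow> x i \<ge> 0"
    and sum_w: "(\<Sum>i\<in>I. w i) = 1" and sum_wx: "(\<Sum>i\<in>I. w i * x i) = 1"
  shows "1/2 * (\<Sum>i\<in>I. w i * \<bar>x i - 1\<bar>)\<^sup>2 \<le> (\<Sum>i\<in>I. w i * Hfun (x i))"
proof -
  define T where "T = (\<Sum>i\<in>I. w i * ((x i - 1)\<^sup>2 / (x i + 2)))"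
  have "(\<Sum>i\<in>I. w i * Hfun (x i)) \<ge> (\<Sum>i\<in>I. w i * (x i - 1 + 3 * (x i - 1)\<^sup>2 / (2 * (x i + 2))))"
    using w x Hfun_ge_quadratic_bound by (intro sum_mono mult_left_mono) auto
  also have "(\<Sum>i\<in>I. w i * (x i - 1 + 3 * (x i - 1)\<^sup>2 / (2 * (x i + 2))))
      = (\<Sum>i\<in>I. w i * x i) - (\<Sum>i\<in>I. w i) + 3/2 * T"
    unfolding T_def by (simp add: algebra_simps sum.distrib sum_subtractf sum_distrib_left)
  finally have entropy_ge: "(\<Sum>i\<in>I. w i * Hfun (x i)) \<ge> 3/2 * T"
    using sum_w sum_wx by simp
  define a where "a i = sqrt (w i * ((x i - 1)\<^sup>2 / (x i + 2)))" for i
  define b where "b i = sqrt (w i * (x i + 2))" for i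
  have ab: "a i * b i = w i * \<bar>x i - 1\<bar>" if "i \<in> I" for i
  proof -
    have "a i * b i = sqrt ((w i)\<^sup>2 * (x i - 1)\<^sup>2)"
      using x[OF that] unfolding a_def b_def
      by (simp add: real_sqrt_mult[symmetric] power2_eq_square field_simps)
    also have "\<dots> = w i * \<bar>x i - 1\<bar>"
      using w[OF that] by (simp add: real_sqrt_mult abs_mult)
    finally show ?thesis .
  qed
  have "(\<Sum>i\<in>I. (b i)\<^sup>2) = (\<Sum>i\<in>I. w i * x i) + 2 * (\<Sum>i\<in>I. w i)"
    using w x unfolding b_def by (simp add: algebra_simps sum.distrib sum_distrib_left sum_distrib_right)
  then have sum_b2: "(\<Sum>i\<in>I. (b i)\<^sup>2) = 3"
    using sum_w sum_wx by simp
  have sum_a2: "(\<Sum>i\<in>I. (a i)\<^sup>2) = T"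
    unfolding T_def a_def using w x by (intro sum.cong) auto
  have "(\<Sum>i\<in>I. w i * \<bar>x i - 1\<bar>)\<^sup>2 = (\<Sum>i\<in>I. a i * b i)\<^sup>2"
    using ab by simp
  also have "\<dots> \<le> (\<Sum>i\<in>I. (a i)\<^sup>2) * (\<Sum>i\<in>I. (b i)\<^sup>2)"
    by (rule Cauchy_Schwarz_ineq_sum)
  finally show ?thesis
    using entropy_ge sum_a2 sum_b2 by simp
qed

lemma e_pairs_Union_left:
  assumes "disjoint P" "\<forall>W\<in>P. finite W" "finite P" "finite Y"
  shows "e_pairs E (\<Union>P) Y = (\<Sum>W\<in>P. e_pairs E W Y)"
proof -
  have "{(u, v). u \<in> \<Union>P \<and> v \<in> Y \<and> E u v} = (\<Union>W\<in>P. {(u, v). u \<in> W \<and> v \<in> Y \<and> E u v})"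
    by auto
  moreover have "card (\<Union>W\<in>P. {(u, v). u \<in> W \<and> v \<in> Y \<and> E u v})
      = (\<Sum>W\<in>P. card {(u, v). u \<in> W \<and> v \<in> Y \<and> E u v})"
  proof (rule card_UN_disjoint)
    show "\<forall>W\<in>P. finite {(u, v). u \<in> W \<and> v \<in> Y \<and> E u v}"
      using assms(2,4) by (auto intro: finite_subset[of _ "_ \<times> Y"])
    show "\<forall>W\<in>P. \<forall>W'\<in>P. W \<noteq> W' \<longrightarrow>
        {(u, v). u \<in> W \<and> v \<in> Y \<and> E u v} \<inter> {(u, v). u \<in> W' \<and> v \<in> Y \<and> E u v} = {}"
      using assms(1) by (auto simp: disjoint_def)
  qed fact
  ultimately show ?thesis by (simp add: e_pairs_def)
qed

lemma e_pairs_swap: "e_pairs E X Y = e_pairs (\<lambda>u v. E v u) Y X"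
proof -
  have "{(u, v). u \<in> X \<and> v \<in> Y \<and> E u v} = prod.swap ` {(v, u). v \<in> Y \<and> u \<in> X \<and> E u v}"
    by auto
  then show ?thesis unfolding e_pairs_def by (simp add: card_image)
qed

lemma finite_partition_on_member:
  assumes "partition_on A P" "finite A" "W \<in> P"
  shows "finite W"
  using assms partition_onD1 by (metis Union_upper finite_subset)

lemma card_partition_on_member_pos:
  assumes "partition_on A P" "finite A" "W \<in> P"
  shows "card W > 0"
  using finite_partition_on_member[OF assms] partition_onD3[OF assms(1)] assms(3)
  by (auto simp: card_gt_0_iff)

lemma e_pairs_partition_on:
  assumes "partition_on A P" "partition_on A' P'" "finite A" "finite A'"
  shows "e_pairs E A A' = (\<Sum>(W, W')\<in>P \<times> P'. e_pairs E W W')"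
proof -
  have finP: "finite P" "finite P'"
    using assms finite_elements by blast+
  have finW: "\<forall>W\<in>P. finite W" "\<forall>W\<in>P'. finite W"
    using assms finite_partition_on_member by blast+
  have "e_pairs E A A' = (\<Sum>W\<in>P. e_pairs E W A')"
    using e_pairs_Union_left[OF partition_onD2[OF assms(1)] finW(1) finP(1) assms(4)]
    by (simp add: partition_onD1[OF assms(1), symmetric])
  also have "\<dots> = (\<Sum>W\<in>P. \<Sum>W'\<in>P'. e_pairs E W W')"
  proof (rule sum.cong)
    fix W assume "W \<in> P"
    then have "finite W" using finW by blast
    from e_pairs_Union_left[OF partition_onD2[OF assms(2)] finW(2) finP(2) this, of "\<lambda>u v. E v u"]
    show "e_pairs E W A' = (\<Sum>W'\<in>P'. e_pairs E W W')"
      by (simp add: e_pairs_swap[of E W] partition_onD1[OF assms(2), symmetric])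
  qed simp
  finally show ?thesis by (simp add: sum.cartesian_product)
qed

lemma sum_card_partition_on:
  assumes "partition_on A P" "finite A"
  shows "(\<Sum>W\<in>P. card W) = card A"
  using card_Union_disjoint[OF partition_onD2[OF assms(1)]] finite_partition_on_member[OF assms]
  by (simp add: partition_onD1[OF assms(1), symmetric])

lemma sum_partition_weights:
  assumes "partition_on A P" "partition_on A' P'" "finite A" "finite A'" "A \<noteq> {}" "A' \<noteq> {}"
  shows "(\<Sum>(W, W')\<in>P \<times> P'. real (card W) * real (card W') / (real (card A) * real (card A'))) = 1"
proof -
  have "(\<Sum>(W, W')\<in>P \<times> P'. real (card W) * real (card W'))
      = (\<Sum>W\<in>P. real (card W)) * (\<Sum>W'\<in>P'. real (card W'))"
    by (simp add: sum_product sum.cartesian_product)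
  also have "\<dots> = real (card A) * real (card A')"
    using sum_card_partition_on[OF assms(1,3)] sum_card_partition_on[OF assms(2,4)]
    by (simp flip: of_nat_sum)
  finally show ?thesis
    using assms(3-6) by (simp add: sum_divide_distrib[symmetric] case_prod_beta)
qed

lemma density_partition_average:
  assumes "partition_on A P" "partition_on A' P'" "finite A" "finite A'"
  shows "(\<Sum>(W, W')\<in>P \<times> P'. real (card W) * real (card W') / (real (card A) * real (card A'))
      * density E W W') = density E A A'"
proof -
  have "real (card W) * real (card W') / (real (card A) * real (card A')) * density E W W'
      = real (e_pairs E W W') / (real (card A) * real (card A'))" if "W \<in> P" "W' \<in> P'" for W W'
    using card_partition_on_member_pos[OF assms(1,3) that(1)]
      card_partition_on_member_pos[OF assms(2,4) that(2)]
    by (simp add: density_def)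
  then have "(\<Sum>(W, W')\<in>P \<times> P'. real (card W) * real (card W') / (real (card A) * real (card A'))
      * density E W W') = (\<Sum>(W, W')\<in>P \<times> P'. real (e_pairs E W W') / (real (card A) * real (card A')))"
    by (intro sum.cong) auto
  also have "\<dots> = (\<Sum>(W, W')\<in>P \<times> P'. real (e_pairs E W W')) / (real (card A) * real (card A'))"
    by (simp add: sum_divide_distrib case_prod_beta)
  also have "\<dots> = density E A A'"
    using e_pairs_partition_on[OF assms, of E] by (simp add: density_def case_prod_beta)
  finally show ?thesis .
qed

lemma entropy_pp_gain:
  assumes "partition_on A P" "partition_on A' P'" "finite A" "finite A'" "density E A A' > 0"
  defines "w \<equiv> \<lambda>(W, W'). real (card W) * real (card W') / (real (card A) * real (card A'))"
    and "x \<equiv> \<lambda>(W, W'). density E W W' / density E A A'"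
  shows "entropy_pp E A P A' P' - entropy_pp E A {A} A' {A'}
    = density E A A' * (\<Sum>p\<in>P \<times> P'. w p * Hfun (x p))"
proof -
  let ?d = "density E A A'"
  have nonempty: "card A \<noteq> 0" "card A' \<noteq> 0"
    using assms(5) unfolding density_def by (metis div_by_0 mult_eq_0_iff of_nat_0 order_less_irrefl)+
  have x_nonneg: "x p \<ge> 0" for p
    using assms(5) by (auto simp: x_def density_def split: prod.split)
  have "entropy_pp E A P A' P' = (\<Sum>p\<in>P \<times> P'. w p * Hfun (?d * x p))"
    unfolding entropy_pp_def w_def x_def using assms(5) by (intro sum.cong) auto
  also have "\<dots> = ?d * (\<Sum>p\<in>P \<times> P'. w p * Hfun (x p)) + ln ?d * (\<Sum>p\<in>P \<times> P'. w p * (?d * x p))"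
    using Hfun_mult[OF assms(5) x_nonneg]
    by (simp add: sum.distrib sum_distrib_left algebra_simps)
  also have "(\<Sum>p\<in>P \<times> P'. w p * (?d * x p)) = ?d"
    using density_partition_average[OF assms(1-4), of E] assms(5)
    by (simp add: w_def x_def case_prod_beta)
  finally show ?thesis
    using nonempty assms(5) by (simp add: entropy_pp_def Hfun_def)
qed

theorem corollary3p3:
  fixes V :: "'a set" and E :: "'a \<Rightarrow> 'a \<Rightarrow> bool"
    and A A' :: "'a set" and P P' :: "'a set set"
  assumes "simple_graph V E"
    and "A \<subseteq> V" and "A' \<subseteq> V"
    and "partition_on A P" and "partition_on A' P'"
    and "density E A A' \<noteq> 0"
  shows "entropy_pp E A P A' P' - entropy_pp E A {A} A' {A'} \<ge>
    1/2 * density E A A' *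
      (\<Sum>(W, W') \<in> P \<times> P'. real (card W) * real (card W') / (real (card A) * real (card A'))
         * \<bar>density E W W' / density E A A' - 1\<bar>)\<^sup>2"
proof -
  define d where "d = density E A A'"
  define w :: "'a set \<times> 'a set \<Rightarrow> real"
    where "w = (\<lambda>(W, W'). real (card W) * real (card W') / (real (card A) * real (card A')))"
  define x :: "'a set \<times> 'a set \<Rightarrow> real"
    where "x = (\<lambda>(W, W'). density E W W' / d)"
  have fin: "finite A" "finite A'"
    using assms(1-3) rev_finite_subset unfolding simple_graph_def by blast+
  have d: "d > 0"
    using assms(6) unfolding d_def density_def by (simp add: order.not_eq_order_implies_strict)
  have nonempty: "A \<noteq> {}" "A' \<noteq> {}"
    using assms(6) unfolding density_def by auto
  have sum_w: "(\<Sum>p\<in>P \<times> P'. w p) = 1"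
    using sum_partition_weights[OF assms(4,5) fin nonempty] by (simp add: w_def)
  have "(\<Sum>p\<in>P \<times> P'. w p * x p) = (\<Sum>(W, W')\<in>P \<times> P'. w (W, W') * density E W W') / d"
    by (simp add: x_def sum_divide_distrib case_prod_beta)
  also have "\<dots> = 1"
    using density_partition_average[OF assms(4,5) fin, of E] d unfolding w_def d_def by simp
  finally have sum_wx: "(\<Sum>p\<in>P \<times> P'. w p * x p) = 1" .
  have "finite (P \<times> P')"
    using assms(4,5) fin finite_elements by blast
  then have pinsker: "1/2 * (\<Sum>p\<in>P \<times> P'. w p * \<bar>x p - 1\<bar>)\<^sup>2 \<le> (\<Sum>p\<in>P \<times> P'. w p * Hfun (x p))"
    by (rule pinsker_Hfun[OF _ _ _ sum_w sum_wx])
      (use d in \<open>auto simp: w_def x_def density_def split: prod.split\<close>)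
  have gain: "entropy_pp E A P A' P' - entropy_pp E A {A} A' {A'} = d * (\<Sum>p\<in>P \<times> P'. w p * Hfun (x p))"
    using entropy_pp_gain[OF assms(4,5) fin, of E] d by (simp add: d_def w_def x_def)
  have "(\<Sum>(W, W') \<in> P \<times> P'. real (card W) * real (card W') / (real (card A) * real (card A'))
      * \<bar>density E W W' / d - 1\<bar>) = (\<Sum>p\<in>P \<times> P'. w p * \<bar>x p - 1\<bar>)"
    by (simp add: w_def x_def case_prod_beta)
  then show ?thesis
    unfolding gain d_def[symmetric] using mult_left_mono[OF pinsker, of d] d by simp
qed

end
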